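(* Let $r_k$, $k\in\mathbb N$, be real polynomials of degree $k$ with $r_k(\lambda)=1-\lambda g_k(\lambda)$, $g_k$ a polynomial, such that $|r_k(\lambda)|\le\kappa_0$ (with $\kappa_0\ge1$) and $|\lambda r_k(\lambda)|\le\kappa_2(k+1)^{-2}$ for all $\lambda\in[0,1]$, $k\in\mathbb N$. Then for all $\lambda,\tau\in[0,1]$ and $k\in\mathbb N$, $$|\lambda(r_k(\lambda)-r_k(\tau))|\le(\kappa_0+2\kappa_2)|\lambda-\tau|,\qquad \sqrt\lambda\,|r_k(\lambda)-r_k(\tau)|\le2\kappa_0\sqrt{\tfrac12+\tfrac{\kappa_2}{\kappa_0}}\;k\,|\lambda-\tau|.$$ *)

theory Defs
  imports "HOL-Computational_Algebra.Polynomial"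
begin

end

theory Submission
  imports Defs
begin

(* The argument reduces both estimates to Markov's inequality on [0,1]: a real polynomial
   p of degree at most n with |p| \<le> M on [0,1] satisfies |p'| \<le> 2 n\<^sup>2 M there, hence
   |p(x) - p(t)| \<le> 2 n\<^sup>2 M |x - t|.  Applied to r_k (degree k, bound \<kappa>0) and to
   \<lambda> r_k(\<lambda>) (degree k+1, bound \<kappa>2/(k+1)\<^sup>2) this gives
     |r_k(x) - r_k(t)| \<le> 2 k\<^sup>2 \<kappa>0 |x - t|   and   |x r_k(x) - t r_k(t)| \<le> 2 \<kappa>2 |x - t|.
   The first claim follows from the second bound by the product rule
   x (r(x) - r(t)) = (x r(x) - t r(t)) - (x - t) r(t); the second claim is the geometric
   mean of the first claim and the Lipschitz bound for r_k, since
   (\<surd>x |D|)\<^sup>2 = |D| \<cdot> |x D|.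

   Markov's inequality is proved in the classical way on [-1,1]:
   Chebyshev polynomials and their nodes give, via Lagrange interpolation, Schur's
   inequality |B| \<le> n M for deg B < n and \<surd>(1-x\<^sup>2) |B(x)| \<le> M;  a rotation on the unit
   circle turns this into Bernstein's inequality \<surd>(1-x\<^sup>2) |p'(x)| \<le> n max|p|; and Schur
   applied to p' yields Markov. *)

fun cheb :: "nat \<Rightarrow> real poly" where
  "cheb 0 = 1"
| "cheb (Suc 0) = [:0, 1:]"
| "cheb (Suc (Suc n)) = [:0, 2:] * cheb (Suc n) - cheb n"

lemma cheb_cos: "poly (cheb n) (cos t) = cos (real n * t)"
proof (induction n rule: cheb.induct)
  case (3 n)
  have "cos (real (Suc (Suc n)) * t) = cos (real (Suc n) * t + t)"
    by (simp add: algebra_simps)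
  also have "\<dots> = 2 * cos t * cos (real (Suc n) * t) - cos (real (Suc n) * t - t)"
    by (simp add: cos_add cos_diff)
  also have "real (Suc n) * t - t = real n * t"
    by (simp add: algebra_simps)
  finally show ?case using 3 by simp
qed auto

lemma cheb_degree_lead_coeff:
  "degree (cheb n) = n \<and> coeff (cheb n) n = (if n = 0 then 1 else 2 ^ (n - 1))"
proof (induction n rule: cheb.induct)
  case (3 n)
  have d1: "degree ([:0, 2:] * cheb (Suc n)) = Suc (Suc n)"
    using 3 by (subst degree_mult_eq) auto
  have d2: "degree (cheb n) < Suc (Suc n)"
    using 3 by simp
  have "degree (cheb (Suc (Suc n))) = Suc (Suc n)"
    using d1 d2 degree_add_eq_left[of "- cheb n" "[:0, 2:] * cheb (Suc n)"] by simp
  moreover have "coeff ([:0, 2:] * cheb (Suc n)) (Suc (Suc n)) = 2 * 2 ^ n"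
    using 3 by simp
  moreover have "coeff (cheb n) (Suc (Suc n)) = 0"
    using 3 by (simp add: coeff_eq_0)
  ultimately show ?case by simp
qed auto

(* At the endpoint 1, T_n = 1 and T_n' = n\<^sup>2: Markov's inequality is sharp for T_n. *)
lemma cheb_at_1: "poly (cheb n) 1 = 1 \<and> poly (pderiv (cheb n)) 1 = real n ^ 2"
proof (induction n rule: cheb.induct)
  case (3 n)
  then show ?case
    by (simp add: pderiv_mult pderiv_diff pderiv_pCons pderiv_smult power2_eq_square
                  algebra_simps)
qed (auto simp: pderiv_pCons)

lemma cheb_deriv_cos: "poly (pderiv (cheb n)) (cos t) * sin t = real n * sin (real n * t)"
proof -
  have d1: "((\<lambda>t. poly (cheb n) (cos t)) has_real_derivative
              poly (pderiv (cheb n)) (cos t) * (- sin t)) (at t)"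
    by (rule DERIV_chain2[OF poly_DERIV DERIV_cos])
  have d2: "((\<lambda>t. cos (real n * t)) has_real_derivative (- sin (real n * t)) * real n) (at t)"
    by (rule DERIV_chain2[OF DERIV_cos]) (auto intro!: derivative_eq_intros)
  have "(\<lambda>t. poly (cheb n) (cos t)) = (\<lambda>t. cos (real n * t))"
    by (simp add: cheb_cos)
  with d1 d2 have "poly (pderiv (cheb n)) (cos t) * (- sin t) = (- sin (real n * t)) * real n"
    using DERIV_unique by metis
  thus ?thesis by simp
qed

lemma abs_sin_mult_le: "\<bar>sin (real n * t)\<bar> \<le> real n * \<bar>sin t\<bar>"
proof (induction n)
  case (Suc n)
  have "real (Suc n) * t = real n * t + t"
    by (simp add: distrib_right)
  hence "\<bar>sin (real (Suc n) * t)\<bar> = \<bar>sin (real n * t) * cos t + cos (real n * t) * sin t\<bar>"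
    by (simp only: sin_add)
  also have "\<dots> \<le> \<bar>sin (real n * t)\<bar> * \<bar>cos t\<bar> + \<bar>cos (real n * t)\<bar> * \<bar>sin t\<bar>"
    unfolding abs_mult[symmetric] by (rule abs_triangle_ineq)
  also have "\<dots> \<le> \<bar>sin (real n * t)\<bar> + \<bar>sin t\<bar>"
    by (intro add_mono) (simp_all add: mult_left_le mult_left_le_one_le)
  finally show ?case using Suc by (simp add: distrib_right)
qed simp

definition theta :: "nat \<Rightarrow> nat \<Rightarrow> real" where
  "theta n k = (2 * real k + 1) * pi / (2 * real n)"

definition node :: "nat \<Rightarrow> nat \<Rightarrow> real" where
  "node n k = cos (theta n k)"

definition node_poly :: "nat \<Rightarrow> real poly" where
  "node_poly n = (\<Prod>i<n. [:- node n i, 1:])"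

abbreviation nodal :: "nat \<Rightarrow> nat \<Rightarrow> real \<Rightarrow> real" where
  "nodal n k z \<equiv> (\<Prod>i\<in>{..<n}-{k}. (z - node n i))"

lemma theta_range:
  assumes "k < n"
  shows "0 < theta n k" "theta n k < pi"
proof -
  have n: "real n > 0" using assms by simp
  show "0 < theta n k" unfolding theta_def using n by simp
  have "2 * real k + 1 < 2 * real n" using assms by linarith
  hence "(2 * real k + 1) * pi < 2 * real n * pi" by simp
  thus "theta n k < pi" unfolding theta_def using n by (simp add: divide_less_eq)
qed

lemma theta_mono: "j \<le> k \<Longrightarrow> 0 < n \<Longrightarrow> theta n j \<le> theta n k"
  unfolding theta_def by (intro divide_right_mono mult_right_mono) auto

lemma sin_theta_pos: "k < n \<Longrightarrow> sin (theta n k) > 0"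
  using theta_range[of k n] by (intro sin_gt_zero) auto

lemma node_inj:
  assumes "i < n" "j < n" "node n i = node n j"
  shows "i = j"
proof -
  have "theta n i = theta n j"
    using cos_inj_pi[of "theta n i" "theta n j"] assms theta_range[OF assms(1)]
      theta_range[OF assms(2)] unfolding node_def by linarith
  hence "(2 * real i + 1) * pi = (2 * real j + 1) * pi"
    unfolding theta_def using assms by (simp add: divide_cancel_right)
  thus ?thesis by simp
qed

lemma node_le_node0: "k < n \<Longrightarrow> node n k \<le> node n 0"
  unfolding node_def using theta_range[of k n] theta_range[of 0 n] theta_mono[of 0 k n]
  by (subst cos_mono_le_eq) auto

lemma node_range: "node n k \<in> {-1..1}"
  unfolding node_def by simp

lemma sqrt_one_minus_node: "k < n \<Longrightarrow> sqrt (1 - node n k ^ 2) = sin (theta n k)"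
  unfolding node_def using sin_theta_pos[of k n] sin_cos_sqrt[of "theta n k"] by simp

lemma cos_n_theta: 
  assumes "k < n"
  shows "cos (real n * theta n k) = 0"
proof -
  have "real n * theta n k = real (2 * k + 1) * (pi / 2)"
    unfolding theta_def using assms by (simp add: field_simps)
  moreover have "cos (real (2 * k + 1) * (pi / 2)) = 0"
    by (subst cos_zero_iff, rule disjI1, rule exI[of _ "2 * k + 1"]) simp
  ultimately show ?thesis by (simp only:)
qed

lemma abs_sin_n_theta: "k < n \<Longrightarrow> \<bar>sin (real n * theta n k)\<bar> = 1"
  using sin_cos_squared_add[of "real n * theta n k"] cos_n_theta[of k n]
  by (simp add: abs_square_eq_1)

(* The nodes are not too close to \<plusminus>1: sin \<theta>\<^sub>0 \<ge> 1/n, since 1 = |sin (n \<theta>\<^sub>0)| \<le> n sin \<theta>\<^sub>0. *)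
lemma sin_theta0_ge: "0 < n \<Longrightarrow> 1 \<le> real n * sin (theta n 0)"
  using abs_sin_n_theta[of 0 n] abs_sin_mult_le[of n "theta n 0"] sin_theta_pos[of 0 n] by simp

lemma cheb_node: "k < n \<Longrightarrow> poly (cheb n) (node n k) = 0"
  unfolding node_def by (simp add: cheb_cos cos_n_theta)

lemma node_poly_degree: "degree (node_poly n) = n"
  and node_poly_lead_coeff: "coeff (node_poly n) n = 1"
proof -
  have "degree (node_poly n) = (\<Sum>i<n. degree [:- node n i, 1:])"
    unfolding node_poly_def by (rule degree_prod_eq_sum_degree) auto
  thus d: "degree (node_poly n) = n" by simp
  have "lead_coeff (node_poly n) = 1"
    unfolding node_poly_def by (simp add: lead_coeff_prod)
  thus "coeff (node_poly n) n = 1" using d by simp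
qed

(* T_n = 2^(n-1) \<prod>(x - node n i): both have degree n, the same leading coefficient and
   agree at the n distinct nodes. *)
lemma cheb_eq_node_poly:
  assumes "n > 0"
  shows "cheb n = smult (2 ^ (n - 1)) (node_poly n)"
proof (rule poly_eqI_degree_lead_coeff[where n = n and A = "node n ` {..<n}"])
  show "coeff (cheb n) n = coeff (smult (2 ^ (n - 1)) (node_poly n)) n"
    using cheb_degree_lead_coeff[of n] node_poly_lead_coeff[of n] assms by simp
  show "n \<le> card (node n ` {..<n})"
    by (subst card_image) (auto intro!: inj_onI node_inj)
  show "degree (cheb n) \<le> n" "degree (smult (2 ^ (n - 1)) (node_poly n)) \<le> n"
    using cheb_degree_lead_coeff[of n] node_poly_degree[of n] by simp_all
  fix z assume "z \<in> node n ` {..<n}"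
  then obtain k where k: "k < n" "z = node n k" by auto
  have "poly (node_poly n) z = 0"
    unfolding node_poly_def poly_prod k(2) using k(1) by (intro prod_zero) auto
  thus "poly (cheb n) z = poly (smult (2 ^ (n - 1)) (node_poly n)) z"
    using k cheb_node by simp
qed

lemma poly_pderiv_node_poly: "poly (pderiv (node_poly n)) z = (\<Sum>k<n. nodal n k z)"
  unfolding node_poly_def pderiv_prod by (simp add: poly_sum poly_prod pderiv_pCons)

lemma pderiv_node_poly_at_node:
  assumes "k < n"
  shows "poly (pderiv (node_poly n)) (node n k) = nodal n k (node n k)"
proof -
  have "(\<Sum>j<n. nodal n j (node n k)) = (\<Sum>j\<in>{k}. nodal n j (node n k))"
    by (rule sum.mono_neutral_right) (use assms in \<open>auto intro!: prod_zero\<close>)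
  thus ?thesis by (simp add: poly_pderiv_node_poly)
qed

(* The Lagrange denominators: 2^(n-1) |nodal n k (node n k)| sin \<theta>\<^sub>k = n. *)
lemma abs_nodal_at_node:
  assumes "k < n"
  shows "2 ^ (n - 1) * \<bar>nodal n k (node n k)\<bar> * sin (theta n k) = real n"
proof -
  have "poly (pderiv (cheb n)) (node n k) = 2 ^ (n - 1) * nodal n k (node n k)"
    using cheb_eq_node_poly[of n] pderiv_node_poly_at_node[OF assms] assms
    by (simp add: pderiv_smult)
  moreover have "poly (pderiv (cheb n)) (node n k) * sin (theta n k)
                   = real n * sin (real n * theta n k)"
    unfolding node_def by (rule cheb_deriv_cos)
  ultimately have "\<bar>2 ^ (n - 1) * nodal n k (node n k) * sin (theta n k)\<bar> = real n"
    using abs_sin_n_theta[OF assms] by (simp add: abs_mult)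
  thus ?thesis using sin_theta_pos[OF assms] by (simp add: abs_mult)
qed

(* The Lagrange numerators at 1 sum to T_n'(1) = n\<^sup>2. *)
lemma sum_nodal_at_1:
  assumes "n > 0"
  shows "2 ^ (n - 1) * (\<Sum>k<n. nodal n k 1) = real n ^ 2"
  using cheb_eq_node_poly[OF assms] cheb_at_1[of n]
  by (simp add: pderiv_smult poly_pderiv_node_poly)

lemma lagrange_interpolation:
  fixes x :: "nat \<Rightarrow> real" and B :: "real poly"
  assumes inj: "\<And>i j. i < n \<Longrightarrow> j < n \<Longrightarrow> x i = x j \<Longrightarrow> i = j"
    and deg: "degree B < n"
  shows "poly B y = (\<Sum>k<n. poly B (x k) * (\<Prod>i\<in>{..<n}-{k}. (y - x i))
                                        / (\<Prod>i\<in>{..<n}-{k}. (x k - x i)))"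
proof -
  define P where "P = (\<Sum>k<n. smult (poly B (x k) / (\<Prod>i\<in>{..<n}-{k}. (x k - x i)))
                                    (\<Prod>i\<in>{..<n}-{k}. [:- x i, 1:]))"
  have poly_P: "poly P z = (\<Sum>k<n. poly B (x k) * (\<Prod>i\<in>{..<n}-{k}. (z - x i))
                                            / (\<Prod>i\<in>{..<n}-{k}. (x k - x i)))" for z
    unfolding P_def by (simp add: poly_sum poly_prod)
  have degree_P: "degree P < n"
  proof -
    have "degree (\<Prod>i\<in>{..<n}-{k}. [:- x i, 1:]) = n - 1" if "k < n" for k
      using that by (subst degree_prod_eq_sum_degree) auto
    hence "degree P \<le> n - 1"
      unfolding P_def by (intro degree_sum_le) (auto intro: order_trans[OF degree_smult_le])
    thus ?thesis using deg by linarith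
  qed
  have card: "card (x ` {..<n}) = n"
    by (subst card_image) (auto intro!: inj_onI inj)
  have B_eq_P: "B = P"
  proof (rule poly_eqI_degree[where A = "x ` {..<n}"])
    show "degree B < card (x ` {..<n})" "degree P < card (x ` {..<n})"
      using card deg degree_P by simp_all
    fix z assume "z \<in> x ` {..<n}"
    then obtain j where j: "j < n" "z = x j" by auto
    (* Only the j-th summand survives at the node x j, and it equals B (x j). *)
    have denom: "(\<Prod>i\<in>{..<n}-{j}. (x j - x i)) \<noteq> 0"
      using inj[of _ j] j(1) by (auto simp: prod_zero_iff)
    have "poly P z = (\<Sum>k\<in>{j}. poly B (x k) * (\<Prod>i\<in>{..<n}-{k}. (z - x i))
                                           / (\<Prod>i\<in>{..<n}-{k}. (x k - x i)))"
      unfolding poly_P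
      by (rule sum.mono_neutral_right) (use j in \<open>auto intro!: prod_zero\<close>)
    also have "\<dots> = poly B z" using denom j by simp
    finally show "poly B z = poly P z" by simp
  qed
  have "poly B y = poly P y" by (simp only: B_eq_P)
  also have "\<dots> = (\<Sum>k<n. poly B (x k) * (\<Prod>i\<in>{..<n}-{k}. (y - x i))
                                        / (\<Prod>i\<in>{..<n}-{k}. (x k - x i)))"
    by (rule poly_P)
  finally show ?thesis .
qed

(* Near the endpoint 1 (to the right of all nodes) interpolate B at the Chebyshev nodes:
   all nodal products are nonnegative and increase towards 1, and 2^(n-1) times
   their sum at 1 is T_n'(1) = n\<^sup>2. *)
lemma schur_near_1:
  fixes B :: "real poly"
  assumes n: "n > 0" "degree B < n"
    and hyp: "\<And>c. c \<in> {-1..1} \<Longrightarrow> sqrt (1 - c^2) * \<bar>poly B c\<bar> \<le> M"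
    and y: "node n 0 \<le> y" "y \<le> 1"
  shows "\<bar>poly B y\<bar> \<le> real n * M"
proof -
  define c :: real where "c = 2 ^ (n - 1)"
  have c: "c > 0" unfolding c_def by simp
  have M: "M \<ge> 0" using hyp[of 0] by simp
  have interp: "poly B y = (\<Sum>k<n. poly B (node n k) * nodal n k y / nodal n k (node n k))"
    by (rule lagrange_interpolation) (auto intro: node_inj n)
  have nodal_y: "0 \<le> nodal n k y \<and> nodal n k y \<le> nodal n k 1" for k
  proof -
    have f: "\<And>i. i \<in> {..<n}-{k} \<Longrightarrow> 0 \<le> y - node n i \<and> y - node n i \<le> 1 - node n i"
      using node_le_node0 y by fastforce
    have "0 \<le> nodal n k y" by (rule prod_nonneg) (use f in blast)
    moreover have "nodal n k y \<le> nodal n k 1" by (rule prod_mono) (use f in blast)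
    ultimately show ?thesis ..
  qed
  have summand: "\<bar>poly B (node n k) * nodal n k y / nodal n k (node n k)\<bar>
                \<le> M * c / real n * nodal n k 1" if k: "k < n" for k
  proof -
    have s: "sin (theta n k) > 0" using sin_theta_pos[OF k] .
    have weighted: "sin (theta n k) * \<bar>poly B (node n k)\<bar> \<le> M"
      using hyp[OF node_range[of n k]] sqrt_one_minus_node[OF k] by simp
    have L: "c * \<bar>nodal n k (node n k)\<bar> * sin (theta n k) = real n"
      using abs_nodal_at_node[OF k] unfolding c_def .
    hence L0: "nodal n k (node n k) \<noteq> 0"
      using n(1) by (metis abs_zero mult_zero_left mult_zero_right of_nat_0_less_iff less_irrefl)
    have "\<bar>poly B (node n k) * nodal n k y / nodal n k (node n k)\<bar>
          = (sin (theta n k) * \<bar>poly B (node n k)\<bar>) * nodal n k y * c / real n"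
      using nodal_y[of k] L L0 s n(1) by (simp add: abs_mult field_simps)
    also have "\<dots> \<le> M * nodal n k 1 * c / real n"
      using weighted nodal_y[of k] M c s
      by (intro divide_right_mono mult_right_mono mult_mono) auto
    finally show ?thesis by (simp add: field_simps)
  qed
  have "\<bar>poly B y\<bar> \<le> (\<Sum>k<n. \<bar>poly B (node n k) * nodal n k y / nodal n k (node n k)\<bar>)"
    unfolding interp by (rule sum_abs)
  also have "\<dots> \<le> (\<Sum>k<n. M * c / real n * nodal n k 1)"
    by (rule sum_mono) (use summand in auto)
  also have "\<dots> = M / real n * (c * (\<Sum>k<n. nodal n k 1))"
    by (simp add: sum_distrib_left mult.assoc)
  also have "\<dots> = real n * M"
    using sum_nodal_at_1[OF n(1)] n(1) unfolding c_def by (simp add: power2_eq_square)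
  finally show ?thesis .
qed

lemma schur:
  fixes B :: "real poly"
  assumes n: "n > 0" "degree B < n"
    and hyp: "\<And>c. c \<in> {-1..1} \<Longrightarrow> sqrt (1 - c^2) * \<bar>poly B c\<bar> \<le> M"
    and y: "y \<in> {-1..1}"
  shows "\<bar>poly B y\<bar> \<le> real n * M"
proof -
  consider "node n 0 \<le> y" | "y \<le> - node n 0" | "\<bar>y\<bar> \<le> node n 0" by linarith
  thus ?thesis
  proof cases
    case 1
    thus ?thesis using schur_near_1[OF n hyp] y by auto
  next
    case 2
    define B' where "B' = pcompose B [:0, -1:]"
    have poly_B': "poly B' z = poly B (- z)" for z
      unfolding B'_def by (simp add: poly_pcompose)
    have "degree B' < n"
      unfolding B'_def using n by (simp add: degree_pcompose)
    moreover have "sqrt (1 - c^2) * \<bar>poly B' c\<bar> \<le> M" if "c \<in> {-1..1}" for c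
      using hyp[of "-c"] that by (simp add: poly_B')
    ultimately have "\<bar>poly B' (-y)\<bar> \<le> real n * M"
      using schur_near_1[OF n(1), of B' M "-y"] 2 y by auto
    thus ?thesis by (simp add: poly_B')
  next
    case 3
    (* between the outer nodes the weight is at least sin \<theta>\<^sub>0 \<ge> 1/n *)
    have "\<bar>y\<bar>^2 \<le> (cos (theta n 0))^2"
      using power_mono[OF 3 abs_ge_zero, of 2] unfolding node_def .
    hence "y^2 \<le> (cos (theta n 0))^2" by simp
    hence "sin (theta n 0) ^ 2 \<le> 1 - y^2"
      using sin_cos_squared_add[of "theta n 0"] by linarith
    hence "sin (theta n 0) \<le> sqrt (1 - y^2)"
      using sin_theta_pos[OF n(1)] by (simp add: real_le_rsqrt)
    hence "real n * sin (theta n 0) \<le> real n * sqrt (1 - y^2)"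
      by (rule mult_left_mono) simp
    hence "1 \<le> real n * sqrt (1 - y^2)"
      using sin_theta0_ge[OF n(1)] by linarith
    from mult_right_mono[OF this abs_ge_zero[of "poly B y"]]
    have "\<bar>poly B y\<bar> \<le> real n * (sqrt (1 - y^2) * \<bar>poly B y\<bar>)"
      by (simp add: mult.assoc)
    also have "\<dots> \<le> real n * M"
      using hyp[OF y] by (simp add: mult_left_mono)
    finally show ?thesis .
  qed
qed

(* Write a = cos \<alpha>, b = sin \<alpha> and substitute x = a c - b s = cos (\<alpha> + \<phi>) for a point
   (c, s) = (cos \<phi>, sin \<phi>) of the unit circle.  Then p(x) splits into a part A(c) even in s
   and a part s B(c) odd in s, with deg B < deg p; at c = 1 the odd part is the derivative
   of \<phi> \<mapsto> p(cos (\<alpha> + \<phi>)) at \<phi> = 0, i.e. B(1) = -b p'(a). *)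
lemma rotation_decomposition:
  fixes p :: "real poly" and a b :: real
  shows "\<exists>A B. degree A \<le> degree p \<and> (B = 0 \<or> degree B < degree p) \<and>
    (\<forall>c s. s^2 = 1 - c^2 \<longrightarrow> poly p (a*c - b*s) = poly A c + s * poly B c) \<and>
    poly B 1 = - b * poly (pderiv p) a"
proof (induction p)
  case 0
  show ?case by (rule exI[of _ 0], rule exI[of _ 0]) simp
next
  case (pCons a0 p1)
  show ?case
  proof (cases "p1 = 0")
    case True
    show ?thesis by (rule exI[of _ "[:a0:]"], rule exI[of _ 0]) (simp add: True)
  next
    case False
    from pCons.IH obtain A1 B1 where
      dA1: "degree A1 \<le> degree p1" and dB1: "B1 = 0 \<or> degree B1 < degree p1" and
      id1: "\<forall>c s. s^2 = 1 - c^2 \<longrightarrow> poly p1 (a*c - b*s) = poly A1 c + s * poly B1 c" and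
      B1_1: "poly B1 1 = - b * poly (pderiv p1) a"
      by blast
    (* p = a0 + x p1 and x (A1 + s B1) = (a c - b s)(A1 + s B1), using s\<^sup>2 = 1 - c\<^sup>2 *)
    define A where "A = [:a0:] + [:0, a:] * A1 - smult b ([:1, 0, -1:] * B1)"
    define B where "B = [:0, a:] * B1 - smult b A1"
    have deg_times: "degree (q * B1) \<le> degree p1 + d"
      if "degree q \<le> Suc d" for q :: "real poly" and d
    proof (cases "B1 = 0")
      case False
      thus ?thesis using dB1 that degree_mult_le[of q B1] by linarith
    qed simp
    have "degree A \<le> Suc (degree p1)"
      unfolding A_def
      using deg_times[of "[:1, 0, -1:]" 1] dA1 degree_mult_le[of "[:0, a:]" A1]
      by (intro degree_diff_le degree_add_le) (auto intro: order_trans[OF degree_smult_le])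
    moreover have "degree B < Suc (degree p1)"
    proof -
      have "degree B \<le> degree p1"
        unfolding B_def using deg_times[of "[:0, a:]" 0] dA1
        by (intro degree_diff_le) (auto intro: order_trans[OF degree_smult_le])
      thus ?thesis by simp
    qed
    moreover have "poly (pCons a0 p1) (a*c - b*s) = poly A c + s * poly B c"
      if h: "s^2 = 1 - c^2" for c s
    proof -
      have "poly (pCons a0 p1) (a*c - b*s) = a0 + (a*c - b*s) * (poly A1 c + s * poly B1 c)"
        using id1 h by simp
      also have "\<dots> = a0 + a*c*poly A1 c - b * s^2 * poly B1 c
                       + s * (a*c*poly B1 c - b * poly A1 c)"
        by (simp add: algebra_simps power2_eq_square)
      also have "\<dots> = poly A c + s * poly B c"
        unfolding A_def B_def h by (simp add: algebra_simps power2_eq_square)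
      finally show ?thesis .
    qed
    moreover have "poly B 1 = - b * poly (pderiv (pCons a0 p1)) a"
    proof -
      have "poly A1 1 = poly p1 a" using id1[rule_format, of 0 1] by simp
      thus ?thesis unfolding B_def using B1_1 by (simp add: pderiv_pCons algebra_simps)
    qed
    ultimately show ?thesis using False by auto
  qed
qed

lemma rotation_in_interval:
  fixes a b c s :: real
  assumes "a^2 + b^2 = 1" "c^2 + s^2 = 1"
  shows "a*c - b*s \<in> {-1..1}"
proof -
  have "(a*c - b*s)^2 + (a*s + b*c)^2 = (a^2 + b^2) * (c^2 + s^2)"
    by (simp add: algebra_simps power2_eq_square)
  hence "(a*c - b*s)^2 + (a*s + b*c)^2 = 1" using assms by simp
  hence "(a*c - b*s)^2 \<le> 1" using zero_le_power2[of "a*s + b*c"] by linarith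
  thus ?thesis by (simp add: abs_square_le_1 abs_le_iff)
qed

(* The odd part s B(c) = (p(ac - bs) - p(ac + bs))/2 is bounded by M, so Schur's inequality
   applies to B and bounds B(1) = -b p'(a). *)
lemma bernstein:
  fixes p :: "real poly"
  assumes n: "n > 0" "degree p \<le> n"
    and bd: "\<And>x. x \<in> {-1..1} \<Longrightarrow> \<bar>poly p x\<bar> \<le> M"
    and a: "a \<in> {-1..1}"
  shows "sqrt (1 - a^2) * \<bar>poly (pderiv p) a\<bar> \<le> real n * M"
proof -
  define b where "b = sqrt (1 - a^2)"
  have a2: "a^2 \<le> 1" using a by (simp add: abs_square_le_1 abs_le_iff)
  have b0: "b \<ge> 0" unfolding b_def using a2 by simp
  have ab: "a^2 + b^2 = 1" unfolding b_def using a2 by simp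
  obtain A B where dB: "B = 0 \<or> degree B < degree p"
    and split: "\<forall>c s. s^2 = 1 - c^2 \<longrightarrow> poly p (a*c - b*s) = poly A c + s * poly B c"
    and B_1: "poly B 1 = - b * poly (pderiv p) a"
    using rotation_decomposition[of p a b] by blast
  have odd_part: "sqrt (1 - c^2) * \<bar>poly B c\<bar> \<le> M" if c: "c \<in> {-1..1}" for c
  proof -
    define s where "s = sqrt (1 - c^2)"
    have c2: "c^2 \<le> 1" using c by (simp add: abs_square_le_1 abs_le_iff)
    have s0: "s \<ge> 0" and ss: "s^2 = 1 - c^2" unfolding s_def using c2 by simp_all
    have "poly p (a*c - b*s) = poly A c + s * poly B c"
      and "poly p (a*c - b*(-s)) = poly A c + (-s) * poly B c"
      using split[rule_format, of s c] split[rule_format, of "-s" c] ss by simp_all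
    hence "2 * (s * poly B c) = poly p (a*c - b*s) - poly p (a*c - b*(-s))"
      by simp
    moreover have "a*c - b*s \<in> {-1..1}"
      by (rule rotation_in_interval) (use ab ss in simp_all)
    hence "\<bar>poly p (a*c - b*s)\<bar> \<le> M" by (rule bd)
    moreover have "a*c - b*(-s) \<in> {-1..1}"
      by (rule rotation_in_interval) (use ab ss in simp_all)
    hence "\<bar>poly p (a*c - b*(-s))\<bar> \<le> M" by (rule bd)
    ultimately have "\<bar>2 * (s * poly B c)\<bar> \<le> 2 * M"
      by linarith
    thus ?thesis using s0 unfolding s_def[symmetric] by (simp add: abs_mult)
  qed
  have "degree B < n" using dB n by auto
  hence "\<bar>poly B 1\<bar> \<le> real n * M" by (rule schur[OF n(1) _ odd_part]) auto
  thus ?thesis using B_1 b0 unfolding b_def[symmetric] by (simp add: abs_mult)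
qed

lemma markov:
  fixes p :: "real poly"
  assumes n: "degree p \<le> n"
    and bd: "\<And>x. x \<in> {-1..1} \<Longrightarrow> \<bar>poly p x\<bar> \<le> M"
    and y: "y \<in> {-1..1}"
  shows "\<bar>poly (pderiv p) y\<bar> \<le> real n ^ 2 * M"
proof (cases "n = 0")
  case True
  hence "pderiv p = 0" using n by (simp add: pderiv_eq_0_iff)
  moreover have "M \<ge> 0" using bd[of 0] by simp
  ultimately show ?thesis by simp
next
  case False
  have "degree (pderiv p) < n" using n False by (simp add: degree_pderiv)
  hence "\<bar>poly (pderiv p) y\<bar> \<le> real n * (real n * M)"
    using False by (intro schur[OF _ _ bernstein[OF _ n bd] y]) auto
  thus ?thesis by (simp add: power2_eq_square)
qed

lemma markov_01:
  fixes p :: "real poly"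
  assumes n: "degree p \<le> n"
    and bd: "\<And>x. x \<in> {0..1} \<Longrightarrow> \<bar>poly p x\<bar> \<le> M"
    and x: "x \<in> {0..1}"
  shows "\<bar>poly (pderiv p) x\<bar> \<le> 2 * real n ^ 2 * M"
proof -
  define q where "q = pcompose p [:1/2, 1/2:]"
  have poly_q: "poly q y = poly p (1/2 + y/2)" for y
    unfolding q_def by (simp add: poly_pcompose)
  have poly_pderiv_q: "poly (pderiv q) y = poly (pderiv p) (1/2 + y/2) / 2" for y
    unfolding q_def by (simp add: pderiv_pcompose poly_pcompose pderiv_pCons)
  have "degree q \<le> n" unfolding q_def using n by (simp add: degree_pcompose)
  moreover have "\<bar>poly q y\<bar> \<le> M" if "y \<in> {-1..1}" for y
    unfolding poly_q using that by (intro bd) auto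
  ultimately have "\<bar>poly (pderiv q) (2*x - 1)\<bar> \<le> real n ^ 2 * M"
    using x by (intro markov) auto
  thus ?thesis unfolding poly_pderiv_q by (simp add: field_simps)
qed

lemma lipschitz_01:
  fixes p :: "real poly"
  assumes n: "degree p \<le> n"
    and bd: "\<And>x. x \<in> {0..1} \<Longrightarrow> \<bar>poly p x\<bar> \<le> M"
    and x: "x \<in> {0..1}" and t: "t \<in> {0..1}"
  shows "\<bar>poly p x - poly p t\<bar> \<le> 2 * real n ^ 2 * M * \<bar>x - t\<bar>"
proof -
  obtain z where z: "z \<in> {0..1}" and mvt: "poly p x - poly p t = (x - t) * poly (pderiv p) z"
    using poly_MVT'[of t x "{0..1}" p] x t by auto
  have "\<bar>poly p x - poly p t\<bar> = \<bar>x - t\<bar> * \<bar>poly (pderiv p) z\<bar>"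
    unfolding mvt by (simp add: abs_mult)
  also have "\<dots> \<le> \<bar>x - t\<bar> * (2 * real n ^ 2 * M)"
    using markov_01[OF n bd z] by (intro mult_left_mono) auto
  finally show ?thesis by (simp add: mult.commute)
qed

lemma lipschitz_times_x:
  fixes p :: "real poly"
  assumes deg: "degree p \<le> k"
    and bd: "\<And>x. x \<in> {0..1} \<Longrightarrow> \<bar>x * poly p x\<bar> \<le> c / (real k + 1)^2"
    and x: "x \<in> {0..1}" and t: "t \<in> {0..1}"
  shows "\<bar>x * poly p x - t * poly p t\<bar> \<le> 2 * c * \<bar>x - t\<bar>"
proof -
  have "degree ([:0, 1:] * p) \<le> Suc k"
    using degree_mult_le[of "[:0, 1::real:]" p] deg by simp
  hence "\<bar>x * poly p x - t * poly p t\<bar>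
           \<le> 2 * real (Suc k) ^ 2 * (c / (real k + 1)^2) * \<bar>x - t\<bar>"
    using lipschitz_01[of "[:0, 1:] * p" "Suc k" "c / (real k + 1)^2" x t] bd x t by simp
  thus ?thesis by (simp add: field_simps)
qed

lemma difference_times_x:
  fixes x t u v :: real
  assumes "\<bar>v\<bar> \<le> K" "\<bar>x * u - t * v\<bar> \<le> L * \<bar>x - t\<bar>"
  shows "\<bar>x * (u - v)\<bar> \<le> (K + L) * \<bar>x - t\<bar>"
proof -
  have "x * (u - v) = (x * u - t * v) - (x - t) * v" by (simp add: algebra_simps)
  hence "\<bar>x * (u - v)\<bar> \<le> \<bar>x * u - t * v\<bar> + \<bar>x - t\<bar> * \<bar>v\<bar>"
    by (simp add: abs_mult[symmetric] abs_triangle_ineq4)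
  also have "\<dots> \<le> L * \<bar>x - t\<bar> + \<bar>x - t\<bar> * K"
    using assms by (intro add_mono mult_left_mono) auto
  finally show ?thesis by (simp add: algebra_simps)
qed

lemma sqrt_times_le_geometric_mean:
  fixes x D a b :: real
  assumes "x \<ge> 0" "\<bar>D\<bar> \<le> a" "\<bar>x * D\<bar> \<le> b"
  shows "sqrt x * \<bar>D\<bar> \<le> sqrt (a * b)"
proof -
  have "(sqrt x * \<bar>D\<bar>)^2 = \<bar>D\<bar> * \<bar>x * D\<bar>"
    using assms(1) by (simp add: power_mult_distrib abs_mult power2_eq_square)
  also have "\<dots> \<le> a * b"
    using assms by (intro mult_mono) auto
  finally show ?thesis by (simp add: real_le_rsqrt)
qed

lemma markov_constant:
  fixes \<kappa>0 \<kappa>2 d :: real and k :: nat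
  assumes "\<kappa>0 > 0" "\<kappa>2 \<ge> 0" "d \<ge> 0"
  shows "sqrt ((2 * real k ^ 2 * \<kappa>0 * d) * ((\<kappa>0 + 2 * \<kappa>2) * d))
           = 2 * \<kappa>0 * sqrt (1/2 + \<kappa>2 / \<kappa>0) * real k * d"
proof -
  have "(2 * real k ^ 2 * \<kappa>0 * d) * ((\<kappa>0 + 2 * \<kappa>2) * d)
          = (2 * \<kappa>0 * real k * d)^2 * (1/2 + \<kappa>2 / \<kappa>0)"
    using assms(1) by (simp add: field_simps power2_eq_square)
  thus ?thesis using assms by (simp add: real_sqrt_mult)
qed

theorem lemma2:
  fixes r :: "nat \<Rightarrow> real poly" and \<kappa>0 \<kappa>2 :: real
  assumes deg: "\<And>k. degree (r k) = k"
    and resid: "\<And>k. \<exists>g :: real poly. r k = 1 - [:0, 1:] * g"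
    and k0: "\<kappa>0 \<ge> 1"
    and bound0: "\<And>k x. x \<in> {0..1} \<Longrightarrow> \<bar>poly (r k) x\<bar> \<le> \<kappa>0"
    and bound2: "\<And>k x. x \<in> {0..1} \<Longrightarrow> \<bar>x * poly (r k) x\<bar> \<le> \<kappa>2 / (real k + 1)^2"
  shows "\<forall>k. \<forall>x\<in>{0..1}. \<forall>t\<in>{0..1}.
           \<bar>x * (poly (r k) x - poly (r k) t)\<bar> \<le> (\<kappa>0 + 2 * \<kappa>2) * \<bar>x - t\<bar>
         \<and> sqrt x * \<bar>poly (r k) x - poly (r k) t\<bar>
             \<le> 2 * \<kappa>0 * sqrt (1/2 + \<kappa>2 / \<kappa>0) * real k * \<bar>x - t\<bar>"
proof (intro allI ballI conjI)
  fix k :: nat and x t :: real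
  assume x: "x \<in> {0..1}" and t: "t \<in> {0..1}"
  have "\<kappa>2 \<ge> 0"
    using bound2[of 0 k] by (simp add: zero_le_divide_iff)
  have lip_r: "\<bar>poly (r k) x - poly (r k) t\<bar> \<le> 2 * real k ^ 2 * \<kappa>0 * \<bar>x - t\<bar>"
    using lipschitz_01[OF _ bound0 x t] deg by simp
  have "\<bar>x * poly (r k) x - t * poly (r k) t\<bar> \<le> 2 * \<kappa>2 * \<bar>x - t\<bar>"
    using lipschitz_times_x[OF _ bound2 x t] deg by simp
  thus first: "\<bar>x * (poly (r k) x - poly (r k) t)\<bar> \<le> (\<kappa>0 + 2 * \<kappa>2) * \<bar>x - t\<bar>"
    using difference_times_x bound0[OF t] by blast
  have "sqrt x * \<bar>poly (r k) x - poly (r k) t\<bar>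
          \<le> sqrt ((2 * real k ^ 2 * \<kappa>0 * \<bar>x - t\<bar>) * ((\<kappa>0 + 2 * \<kappa>2) * \<bar>x - t\<bar>))"
    using x lip_r first by (intro sqrt_times_le_geometric_mean) auto
  also have "\<dots> = 2 * \<kappa>0 * sqrt (1/2 + \<kappa>2 / \<kappa>0) * real k * \<bar>x - t\<bar>"
    using k0 \<open>\<kappa>2 \<ge> 0\<close> by (intro markov_constant) auto
  finally show "sqrt x * \<bar>poly (r k) x - poly (r k) t\<bar>
                  \<le> 2 * \<kappa>0 * sqrt (1/2 + \<kappa>2 / \<kappa>0) * real k * \<bar>x - t\<bar>" .
qed

end
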